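(* In the inexact augmented Lagrangian method described in the context, for all $t\ge1$, $$\|\lambda_t-\lambda^*\|\le\sqrt{\|\lambda_1-\lambda^*\|^2+2\beta\sum_{i=1}^{t-1}\epsilon_i}.$$
   Context: Problem: $\min_{x\in\mathcal{X}}f(x)$ s.t. $Ax=b$, with $f:\mathbb{R}^n\to\mathbb{R}$ convex and differentiable, $\mathcal{X}\subseteq\mathbb{R}^n$ nonempty, closed, bounded and convex, $A\in\mathbb{R}^{m\times n}$, $b\in\mathbb{R}^m$. Augmented Lagrangian $\mathcal{L}^\beta(x,\lambda)=f(x)+\langle\lambda,Ax-b\rangle+\frac{\beta}{2}\|Ax-b\|^2$, $\beta>0$; dual function $d(\lambda)=\min_{x\in\mathcal{X}}\mathcal{L}^\beta(x,\lambda)$; $\lambda^*$ is a maximizer of $d$ (assumed to exist); Euclidean norms. Method: given $x_1\in\mathcal{X}$, $\lambda_1$, nonnegative $(\epsilon_t)$, for $t\ge1$ choose $x_{t+1}\in\mathcal{X}$ with $\mathcal{L}^\beta(x_{t+1},\lambda_t)-d(\lambda_t)\le\epsilon_t$ and set $\lambda_{t+1}=\lambda_t+\frac{\beta}{2}(Ax_{t+1}-b)$. *)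

theory Defs
  imports "HOL-Analysis.Analysis"
begin

definition aug_lagr ::
  "(real^'n \<Rightarrow> real) \<Rightarrow> real^'n^'m \<Rightarrow> real^'m \<Rightarrow> real \<Rightarrow> real^'n \<Rightarrow> real^'m \<Rightarrow> real" where
  "aug_lagr f A b \<beta> x lam = f x + inner lam (A *v x - b) + \<beta> / 2 * (norm (A *v x - b))\<^sup>2"

text \<open>Dual function d(lambda) = min over X of the augmented Lagrangian (written as Inf; the
  minimum is attained since X is compact and the Lagrangian continuous).\<close>
definition dual_fun ::
  "(real^'n \<Rightarrow> real) \<Rightarrow> (real^'n) set \<Rightarrow> real^'n^'m \<Rightarrow> real^'m \<Rightarrow> real \<Rightarrow> real^'m \<Rightarrow> real" where
  "dual_fun f X A b \<beta> lam = (INF x\<in>X. aug_lagr f A b \<beta> x lam)"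

end

theory Submission
  imports Defs
begin

text \<open>
  For fixed multiplier lam the augmented Lagrangian is a convex function plus
  beta/2 * norm (A x - b)^2, so it grows quadratically in the residual A x - b away from its
  minimisers over X. Hence for an e-minimiser x with residual g the multiplier step is an inexact
  ascent step, d (lam + beta/2 g) >= d lam - e + beta/4 * norm g^2, while g is an
  e-supergradient, d mu <= d lam + e + <mu - lam, g>. Evaluating both at the maximiser lstar gives
  <g, lam - lstar> + beta/4 * norm g^2 <= 2 e, which is exactly
  norm (lam_{t+1} - lstar)^2 <= norm (lam_t - lstar)^2 + 2 beta e_t; summing proves the bound.
\<close>

lemma power2_norm_convex_combination:
  fixes a c :: "'a::real_inner"
  shows "(norm ((1 - s) *\<^sub>R a + s *\<^sub>R c))\<^sup>2
    = (1 - s) * (norm a)\<^sup>2 + s * (norm c)\<^sup>2 - s * (1 - s) * (norm (c - a))\<^sup>2"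
  unfolding power2_norm_eq_inner
  by (simp add: inner_commute[of c a] algebra_simps power2_eq_square)

lemma power2_norm_diff_le:
  fixes a c :: "'a::real_normed_vector"
  shows "(norm (a - c))\<^sup>2 \<le> 2 * (norm a)\<^sup>2 + 2 * (norm c)\<^sup>2"
proof -
  have "(norm (a - c))\<^sup>2 \<le> (norm a + norm c)\<^sup>2"
    by (simp add: norm_triangle_ineq4 power_mono)
  also have "\<dots> \<le> 2 * (norm a)\<^sup>2 + 2 * (norm c)\<^sup>2"
    using zero_le_power2[of "norm a - norm c"] by (simp add: power2_eq_square algebra_simps)
  finally show ?thesis .
qed

lemma quadratic_growth_at_minimizer:
  fixes T :: "'a::real_vector \<Rightarrow> 'b::real_inner"
  assumes X: "convex X" and h: "convex_on X h" and T: "linear T" and c: "c \<ge> 0"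
    and xs: "xs \<in> X"
    and min: "\<And>z. z \<in> X \<Longrightarrow> h xs + c * (norm (T xs - v))\<^sup>2 \<le> h z + c * (norm (T z - v))\<^sup>2"
    and y: "y \<in> X"
  shows "h xs + c * (norm (T xs - v))\<^sup>2 + c * (norm (T y - T xs))\<^sup>2 \<le> h y + c * (norm (T y - v))\<^sup>2"
proof -
  define F where "F z = h z + c * (norm (T z - v))\<^sup>2" for z
  define D where "D = (norm (T y - T xs))\<^sup>2"
  have along_segment: "F xs + (1 - s) * c * D \<le> F y" if s: "0 < s" "s < 1" for s
  proof -
    define z where "z = (1 - s) *\<^sub>R xs + s *\<^sub>R y"
    have "z \<in> X"
      using X xs y s unfolding z_def by (simp add: convex_alt)
    have Tz: "T z - v = (1 - s) *\<^sub>R (T xs - v) + s *\<^sub>R (T y - v)"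
      unfolding z_def linear_add[OF T] linear_scale[OF T] by (simp add: algebra_simps)
    have hz: "h z \<le> (1 - s) * h xs + s * h y"
      unfolding z_def using convex_onD[OF h, of s xs y] xs y s by simp
    have "F xs \<le> F z"
      using min[OF \<open>z \<in> X\<close>] unfolding F_def .
    also have "\<dots> \<le> (1 - s) * F xs + s * F y - s * (1 - s) * c * D"
      using hz c unfolding F_def D_def Tz power2_norm_convex_combination
      by (simp add: algebra_simps)
    finally have "s * (F xs + (1 - s) * c * D) \<le> s * F y"
      by (simp add: algebra_simps)
    then show ?thesis
      using s by simp
  qed
  have "((\<lambda>s. F xs + (1 - s) * c * D) \<longlongrightarrow> F xs + (1 - 0) * c * D) (at_right 0)"
    by (intro tendsto_intros)
  moreover have "eventually (\<lambda>s. F xs + (1 - s) * c * D \<le> F y) (at_right 0)"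
    unfolding eventually_at_right[OF zero_less_one] using along_segment by (intro exI[of _ 1]) auto
  ultimately have "F xs + c * D \<le> F y"
    by (simp add: tendsto_upperbound)
  then show ?thesis
    unfolding F_def D_def .
qed

lemma aug_lagr_change_multiplier:
  "aug_lagr f A b \<beta> x \<mu> = aug_lagr f A b \<beta> x lam + inner (\<mu> - lam) (A *v x - b)"
  unfolding aug_lagr_def by (simp add: inner_diff_left)

locale aug_lagr_problem =
  fixes f :: "real^'n \<Rightarrow> real" and X :: "(real^'n) set"
    and A :: "real^'n^'m" and b :: "real^'m" and \<beta> :: real
  assumes f_convex: "convex_on UNIV f" and f_continuous: "continuous_on UNIV f"
    and X_convex: "convex X" and X_compact: "compact X" and X_nonempty: "X \<noteq> {}"
    and beta_pos: "\<beta> > 0"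
begin

abbreviation L :: "real^'n \<Rightarrow> real^'m \<Rightarrow> real" where
  "L \<equiv> aug_lagr f A b \<beta>"

abbreviation d :: "real^'m \<Rightarrow> real" where
  "d \<equiv> dual_fun f X A b \<beta>"

lemma dual_fun_attained:
  obtains xs where "xs \<in> X" "d lam = L xs lam" "\<And>y. y \<in> X \<Longrightarrow> L xs lam \<le> L y lam"
proof -
  have "continuous_on X (\<lambda>y. L y lam)"
    unfolding aug_lagr_def
    by (intro continuous_intros continuous_on_subset[OF f_continuous]) auto
  then obtain xs where xs: "xs \<in> X" and min: "\<And>y. y \<in> X \<Longrightarrow> L xs lam \<le> L y lam"
    using continuous_attains_inf[OF X_compact X_nonempty] by blast
  have "bdd_below ((\<lambda>y. L y lam) ` X)"
    by (intro bdd_belowI2[where m = "L xs lam"] min)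
  then have "d lam = L xs lam"
    unfolding dual_fun_def using xs min X_nonempty
    by (intro antisym cINF_lower cINF_greatest) auto
  with xs min show thesis
    using that by blast
qed

lemma dual_fun_le_aug_lagr: "y \<in> X \<Longrightarrow> d lam \<le> L y lam"
  by (metis dual_fun_attained)

lemma dual_fun_greatest: "(\<And>y. y \<in> X \<Longrightarrow> c \<le> L y lam) \<Longrightarrow> c \<le> d lam"
  unfolding dual_fun_def using X_nonempty by (rule cINF_greatest)

lemma aug_lagr_quadratic_growth:
  assumes xs: "xs \<in> X" "d lam = L xs lam" and y: "y \<in> X"
  shows "d lam + \<beta> / 2 * (norm (A *v y - A *v xs))\<^sup>2 \<le> L y lam"
proof -
  have "convex_on UNIV (\<lambda>z. inner lam (A *v z - b))"
    unfolding convex_on_def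
    by (auto simp: linear_scale[OF matrix_vector_mul_linear] algebra_simps
        simp flip: distrib_right)
  then have h_convex: "convex_on X (\<lambda>z. f z + inner lam (A *v z - b))"
    using convex_on_add[OF f_convex] convex_on_subset X_convex by blast
  have min: "L xs lam \<le> L z lam" if "z \<in> X" for z
    using xs(2) dual_fun_le_aug_lagr[OF that, of lam] by simp
  show ?thesis
    using quadratic_growth_at_minimizer[OF X_convex h_convex matrix_vector_mul_linear[of A] _ xs(1)
        min[unfolded aug_lagr_def] y] beta_pos xs(2)
    by (simp add: aug_lagr_def)
qed

lemma dual_fun_ascent:
  assumes xh: "xh \<in> X" and gap: "L xh lam - d lam \<le> e"
  shows "d lam - e + \<beta> / 4 * (norm (A *v xh - b))\<^sup>2 \<le> d (lam + (\<beta> / 2) *\<^sub>R (A *v xh - b))"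
proof -
  define g where "g = A *v xh - b"
  obtain xs where xs: "xs \<in> X" "d lam = L xs lam"
    by (rule dual_fun_attained)
  define us where "us = A *v xs - b"
  have xh_near: "\<beta> / 2 * (norm (g - us))\<^sup>2 \<le> e"
    using aug_lagr_quadratic_growth[OF xs xh] gap by (simp add: g_def us_def)
  show ?thesis
    unfolding g_def[symmetric]
  proof (rule dual_fun_greatest)
    fix y
    assume y: "y \<in> X"
    define u where "u = A *v y - b"
    have "d lam + \<beta> / 2 * (norm (u - us))\<^sup>2 \<le> L y lam"
      using aug_lagr_quadratic_growth[OF xs y] by (simp add: u_def us_def)
    moreover have "\<beta> / 4 * (norm (u - g))\<^sup>2 \<le> \<beta> / 2 * (norm (u - us))\<^sup>2 + \<beta> / 2 * (norm (g - us))\<^sup>2"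
      using mult_left_mono[OF power2_norm_diff_le[of "u - us" "g - us"], of "\<beta> / 4"] beta_pos
      by (simp add: algebra_simps)
    ultimately have "d lam - e + \<beta> / 4 * (norm (u - g))\<^sup>2 \<le> L y lam"
      using xh_near by linarith
    moreover have "L y (lam + (\<beta> / 2) *\<^sub>R g) = L y lam + \<beta> / 2 * inner g u"
      using aug_lagr_change_multiplier[of f A b \<beta> y "lam + (\<beta> / 2) *\<^sub>R g" lam]
      by (simp add: u_def)
    moreover have "\<beta> / 2 * inner g u
        = \<beta> / 4 * (norm g)\<^sup>2 + \<beta> / 4 * (norm u)\<^sup>2 - \<beta> / 4 * (norm (u - g))\<^sup>2"
      by (simp add: dot_norm_neg norm_minus_commute field_simps)
    moreover have "0 \<le> \<beta> / 4 * (norm u)\<^sup>2"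
      using beta_pos by simp
    ultimately show "d lam - e + \<beta> / 4 * (norm g)\<^sup>2 \<le> L y (lam + (\<beta> / 2) *\<^sub>R g)"
      by linarith
  qed
qed

lemma dual_fun_inexact_supergradient:
  assumes xh: "xh \<in> X" and gap: "L xh lam - d lam \<le> e"
  shows "d \<mu> \<le> d lam + e + inner (\<mu> - lam) (A *v xh - b)"
  using dual_fun_le_aug_lagr[OF xh, of \<mu>] aug_lagr_change_multiplier[of f A b \<beta> xh \<mu> lam] gap
  by linarith

lemma multiplier_update_dist:
  assumes xh: "xh \<in> X" and gap: "L xh lam - d lam \<le> e"
    and lstar_max: "\<And>\<mu>. d \<mu> \<le> d lstar"
  shows "(norm (lam + (\<beta> / 2) *\<^sub>R (A *v xh - b) - lstar))\<^sup>2 \<le> (norm (lam - lstar))\<^sup>2 + 2 * \<beta> * e"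
proof -
  define g where "g = A *v xh - b"
  have "d lam - e + \<beta> / 4 * (norm g)\<^sup>2 \<le> d lam + e + inner (lstar - lam) g"
    using dual_fun_ascent[OF xh gap] lstar_max[of "lam + (\<beta> / 2) *\<^sub>R g"]
      dual_fun_inexact_supergradient[OF xh gap, of lstar]
    unfolding g_def by linarith
  then have "inner (lam - lstar) g + \<beta> / 4 * (norm g)\<^sup>2 \<le> 2 * e"
    by (simp add: inner_diff_left)
  then have "\<beta> * inner (lam - lstar) g + \<beta>\<^sup>2 / 4 * (norm g)\<^sup>2 \<le> 2 * \<beta> * e"
    using mult_left_mono[of _ _ \<beta>] beta_pos by (fastforce simp: algebra_simps power2_eq_square)
  moreover have "(norm ((lam - lstar) + (\<beta> / 2) *\<^sub>R g))\<^sup>2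
      = (norm (lam - lstar))\<^sup>2 + \<beta> * inner (lam - lstar) g + \<beta>\<^sup>2 / 4 * (norm g)\<^sup>2"
    using dot_norm[of "lam - lstar" "(\<beta> / 2) *\<^sub>R g"]
    by (simp add: power_mult_distrib power_divide)
  ultimately show ?thesis
    unfolding g_def by (simp add: diff_add_eq)
qed

end

lemma sum_bound_from_increments:
  fixes a c :: "nat \<Rightarrow> real"
  assumes step: "\<And>t. t \<ge> 1 \<Longrightarrow> a (t + 1) \<le> a t + c t" and "t \<ge> 1"
  shows "a t \<le> a 1 + (\<Sum>i = 1..t - 1. c i)"
  using \<open>t \<ge> 1\<close>
proof (induction t rule: nat_induct_at_least)
  case base
  then show ?case by simp
next
  case (Suc n)
  have "{1..Suc n - 1} = insert n {1..n - 1}"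
    using Suc.hyps by auto
  then have "(\<Sum>i = 1..Suc n - 1. c i) = c n + (\<Sum>i = 1..n - 1. c i)"
    using Suc.hyps by simp
  then show ?case
    using step[OF Suc.hyps] Suc.IH by simp
qed

theorem lemma10:
  fixes f :: "real^'n \<Rightarrow> real"
    and X :: "(real^'n) set"
    and A :: "real^'n^'m" and b :: "real^'m"
    and \<beta> :: real
    and lstar :: "real^'m"
    and x :: "nat \<Rightarrow> real^'n" and lam :: "nat \<Rightarrow> real^'m"
    and \<epsilon> :: "nat \<Rightarrow> real"
  assumes f_convex: "convex_on UNIV f"
    and f_diff: "\<And>z. f differentiable (at z)"
    and X_ne: "X \<noteq> {}" and X_closed: "closed X" and X_bounded: "bounded X"
    and X_convex: "convex X"
    and beta_pos: "\<beta> > 0"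
    and lstar_max: "\<And>\<mu>. dual_fun f X A b \<beta> \<mu> \<le> dual_fun f X A b \<beta> lstar"
    and eps_nonneg: "\<And>t. \<epsilon> t \<ge> 0"
    and x1: "x 1 \<in> X"
    and x_in: "\<And>t. t \<ge> 1 \<Longrightarrow> x (t + 1) \<in> X"
    and x_inexact: "\<And>t. t \<ge> 1 \<Longrightarrow>
        aug_lagr f A b \<beta> (x (t + 1)) (lam t) - dual_fun f X A b \<beta> (lam t) \<le> \<epsilon> t"
    and lam_upd: "\<And>t. t \<ge> 1 \<Longrightarrow> lam (t + 1) = lam t + (\<beta> / 2) *\<^sub>R (A *v x (t + 1) - b)"
    and t_ge: "t \<ge> 1"
  shows "norm (lam t - lstar) \<le> sqrt ((norm (lam 1 - lstar))\<^sup>2 + 2 * \<beta> * (\<Sum>i = 1..t - 1. \<epsilon> i))"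
proof -
  have "continuous_on UNIV f"
    using f_diff by (intro differentiable_imp_continuous_on) (simp add: differentiable_on_def)
  moreover have "compact X"
    using X_closed X_bounded by (simp add: compact_eq_bounded_closed)
  ultimately interpret aug_lagr_problem f X A b \<beta>
    using f_convex X_convex X_ne beta_pos by unfold_locales
  have "(norm (lam t - lstar))\<^sup>2 \<le> (norm (lam 1 - lstar))\<^sup>2 + (\<Sum>i = 1..t - 1. 2 * \<beta> * \<epsilon> i)"
    by (rule sum_bound_from_increments[OF _ t_ge])
      (use multiplier_update_dist[OF x_in x_inexact lstar_max] lam_upd in simp)
  then show ?thesis
    by (simp add: sum_distrib_left real_le_rsqrt)
qed

end
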